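(* Let $q$ be a prime power, $1\le k\le n-1$, and let $\mathcal{L}$ be a set of affine $k$-spaces of $\mathrm{AG}(n,q)$ with $|\mathcal{L}|=x\left[{n\atop k}\right]_q$ such that $|\mathcal{L}\cap\mathcal{S}|=x$ for every $k$-spread $\mathcal{S}$ of $\mathrm{AG}(n,q)$. Let $\tau_A$ be an arbitrary affine subspace of $\mathrm{AG}(n,q)$ of dimension $i\ge\max\{k+1,3\}$, regarded as the affine space $\mathrm{AG}(i,q)$, and let $[\tau_A]_k$ be the set of affine $k$-spaces contained in $\tau_A$. Then, with $c=|\mathcal{L}\cap[\tau_A]_k|/\left[{i\atop k}\right]_q$, every $k$-spread $\mathcal{S}$ of $\tau_A$ satisfies $|(\mathcal{L}\cap[\tau_A]_k)\cap\mathcal{S}|=c$.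
   Context: $\mathrm{AG}(n,q)$ is $\mathrm{PG}(n,q)$ with a hyperplane $\pi_\infty$ removed; affine points are points outside $\pi_\infty$, affine $k$-spaces are $k$-dimensional projective subspaces not contained in $\pi_\infty$. A $k$-spread of an affine space is a set of its affine $k$-spaces that pairwise share no affine point and cover all its affine points. $\left[{a\atop b}\right]_q=\frac{(q^a-1)\cdots(q^{a-b+1}-1)}{(q^b-1)\cdots(q-1)}$. *)

theory Defs
  imports "HOL-Analysis.Analysis"
begin

text \<open>Model: AG(n,q) is the affine space over the vector space F^n, F a finite field
with q elements (q = CARD('a)), n = CARD('n). An affine k-space is a coset v + W of a
k-dimensional linear subspace W.\<close>

definition aff_space :: "nat \<Rightarrow> ('a::field ^ 'n) set \<Rightarrow> bool" where
  "aff_space k A \<longleftrightarrow> (\<exists>v W. vec.subspace W \<and> vec.dim W = k \<and> A = (\<lambda>w. v + w) ` W)"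

definition kspaces_in :: "nat \<Rightarrow> ('a::field ^ 'n) set \<Rightarrow> ('a ^ 'n) set set" where
  "kspaces_in k T = {A. aff_space k A \<and> A \<subseteq> T}"

definition is_spread :: "nat \<Rightarrow> ('a::field ^ 'n) set \<Rightarrow> ('a ^ 'n) set set \<Rightarrow> bool" where
  "is_spread k T S \<longleftrightarrow> S \<subseteq> kspaces_in k T
     \<and> (\<forall>A\<in>S. \<forall>B\<in>S. A \<noteq> B \<longrightarrow> A \<inter> B = {})
     \<and> \<Union>S = T"

definition qbinom :: "nat \<Rightarrow> nat \<Rightarrow> nat \<Rightarrow> real" where
  "qbinom q a b = (\<Prod>j<b. (real q ^ (a - j) - 1)) / (\<Prod>j<b. (real q ^ (j + 1) - 1))"

end

theory Submission
  imports Defs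
begin

(* Write T = v + W with dim W = i. For a k-subspace U of W the translates of U off T form a
   k-spread of the complement of T; adjoined to a k-spread S of T they give a k-spread of
   AG(n,q), so |L \<inter> S| is x minus a number independent of S. Hence all k-spreads of T meet L
   in the same number c of elements. The parallel classes of the k-subspaces of W are k-spreads
   of T partitioning [T]_k, and counting ordered independent k-tuples shows that there are
   [i choose k]_q of them, so |L \<inter> [T]_k| = c [i choose k]_q. *)

lemma two_le_card_field: "2 \<le> CARD('a::{finite,field})"
proof -
  have "card {0::'a, 1} \<le> CARD('a)" by (rule card_mono) auto
  then show ?thesis by simp
qed

lemma card_span_independent:
  fixes B :: "('a::{finite,field} ^ 'n) set"
  assumes ind: "vec.independent B"
  shows "card (vec.span B) = CARD('a) ^ card B"
proof -
  have fB: "finite B" by simp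
  let ?comb = "\<lambda>g. \<Sum>b\<in>B. g b *s b"
  have "bij_betw ?comb (B \<rightarrow>\<^sub>E (UNIV::'a set)) (vec.span B)"
  proof (rule bij_betwI')
    fix g h assume g: "g \<in> B \<rightarrow>\<^sub>E (UNIV::'a set)" and h: "h \<in> B \<rightarrow>\<^sub>E (UNIV::'a set)"
    show "(?comb g = ?comb h) = (g = h)"
    proof
      assume "?comb g = ?comb h"
      then have "(\<Sum>b\<in>B. (g b - h b) *s b) = 0"
        by (simp add: vector_sub_rdistrib sum_subtractf)
      then have "\<And>b. b \<in> B \<Longrightarrow> g b - h b = 0"
        using vec.independentD[OF ind fB order_refl, of "\<lambda>b. g b - h b"] by blast
      then show "g = h" using g h by (intro PiE_ext) auto
    qed simp
  next
    fix g :: "'a ^ 'n \<Rightarrow> 'a"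
    show "?comb g \<in> vec.span B"
      by (intro vec.span_sum vec.span_scale vec.span_base)
  next
    fix y assume "y \<in> vec.span B"
    then obtain u where u: "y = (\<Sum>v\<in>B. u v *s v)" using vec.span_finite[OF fB] by auto
    show "\<exists>g \<in> B \<rightarrow>\<^sub>E UNIV. y = ?comb g"
      by (rule bexI[of _ "restrict u B"]) (auto simp: u)
  qed
  then have "card (vec.span B) = card (B \<rightarrow>\<^sub>E (UNIV::'a set))"
    by (simp add: bij_betw_same_card)
  then show ?thesis by (simp add: card_PiE)
qed

lemma card_subspace:
  fixes U :: "('a::{finite,field} ^ 'n) set"
  assumes "vec.subspace U"
  shows "card U = CARD('a) ^ vec.dim U"
proof -
  obtain B where B: "B \<subseteq> U" "vec.independent B" "U \<subseteq> vec.span B" "card B = vec.dim U"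
    by (rule vec.basis_exists)
  then have "vec.span B = U" using assms by (simp add: vec.span_subspace)
  then show ?thesis using card_span_independent[OF B(2)] B(4) by simp
qed

definition indep_lists :: "('a::field ^ 'n) set \<Rightarrow> nat \<Rightarrow> ('a ^ 'n) list set" where
  "indep_lists W j = {xs. length xs = j \<and> distinct xs \<and> vec.independent (set xs) \<and> set xs \<subseteq> W}"

lemma finite_indep_lists [simp]: "finite (indep_lists (W::('a::{finite,field} ^ 'n) set) j)"
proof (rule finite_subset)
  show "indep_lists W j \<subseteq> {xs. set xs \<subseteq> UNIV \<and> length xs = j}"
    by (auto simp: indep_lists_def)
qed (rule finite_lists_length_eq, simp)

lemma indep_lists_Suc:
  "indep_lists W (Suc j) = (\<lambda>(xs, v). v # xs) ` (SIGMA xs:indep_lists W j. W - vec.span (set xs))"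
proof safe
  fix ys assume "ys \<in> indep_lists W (Suc j)"
  then obtain v xs where "ys = v # xs" "length xs = j" "distinct (v # xs)"
     "vec.independent (insert v (set xs))" "insert v (set xs) \<subseteq> W"
    by (cases ys) (auto simp: indep_lists_def)
  then show "ys \<in> (\<lambda>(xs, v). v # xs) ` (SIGMA xs:indep_lists W j. W - vec.span (set xs))"
    by (auto simp: indep_lists_def vec.independent_insert intro!: image_eqI[of _ _ "(xs, v)"]
        split: if_splits)
next
  fix v xs assume "xs \<in> indep_lists W j" "v \<in> W" "v \<notin> vec.span (set xs)"
  then show "v # xs \<in> indep_lists W (Suc j)"
    by (auto simp: indep_lists_def vec.independent_insert vec.span_base)
qed

lemma card_indep_lists:
  fixes W :: "('a::{finite,field} ^ 'n) set"
  assumes W: "vec.subspace W"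
  shows "card (indep_lists W j) = (\<Prod>l<j. CARD('a) ^ vec.dim W - CARD('a) ^ l)"
proof (induction j)
  case 0
  have "indep_lists W 0 = {[]}" by (auto simp: indep_lists_def vec.independent_empty)
  then show ?case by simp
next
  case (Suc j)
  have extensions: "card (W - vec.span (set xs)) = CARD('a) ^ vec.dim W - CARD('a) ^ j"
    if xs: "xs \<in> indep_lists W j" for xs
  proof -
    have "vec.span (set xs) \<subseteq> W"
      using xs vec.span_minimal[OF _ W] by (auto simp: indep_lists_def)
    moreover have "card (vec.span (set xs)) = CARD('a) ^ j"
      using xs card_span_independent[of "set xs"] by (auto simp: indep_lists_def distinct_card)
    ultimately show ?thesis using card_subspace[OF W] by (simp add: card_Diff_subset)
  qed
  have "inj_on (\<lambda>(xs, v). v # xs) (SIGMA xs:indep_lists W j. W - vec.span (set xs))"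
    by (auto simp: inj_on_def)
  then have "card (indep_lists W (Suc j))
      = card (SIGMA xs:indep_lists W j. W - vec.span (set xs))"
    unfolding indep_lists_Suc by (rule card_image)
  also have "\<dots> = (\<Sum>xs\<in>indep_lists W j. card (W - vec.span (set xs)))"
    by (rule card_SigmaI) auto
  also have "\<dots> = card (indep_lists W j) * (CARD('a) ^ vec.dim W - CARD('a) ^ j)"
    using extensions by simp
  finally show ?case using Suc.IH by (simp add: mult.commute)
qed

definition grassmannian :: "('a::field ^ 'n) set \<Rightarrow> nat \<Rightarrow> ('a ^ 'n) set set" where
  "grassmannian W k = {U. vec.subspace U \<and> vec.dim U = k \<and> U \<subseteq> W}"

lemma span_indep_list_eq:
  fixes U :: "('a::{finite,field} ^ 'n) set"
  assumes "vec.subspace U" "vec.dim U = k" "xs \<in> indep_lists U k"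
  shows "vec.span (set xs) = U"
proof -
  have "vec.independent (set xs)" "set xs \<subseteq> U" "card (set xs) = k"
    using assms(3) by (auto simp: indep_lists_def distinct_card)
  then show ?thesis
    using vec.card_eq_dim[of "set xs" U] vec.span_minimal[OF _ assms(1)] assms(2) by auto
qed

lemma card_indep_lists_eq_grassmannian:
  fixes W :: "('a::{finite,field} ^ 'n) set"
  assumes W: "vec.subspace W"
  shows "card (indep_lists W k)
    = card (grassmannian W k) * (\<Prod>l<k. CARD('a) ^ k - CARD('a) ^ l)"
proof -
  have lists_by_span: "indep_lists W k = (\<Union>U\<in>grassmannian W k. indep_lists U k)"
  proof safe
    fix xs assume xs: "xs \<in> indep_lists W k"
    then have "vec.independent (set xs)" "set xs \<subseteq> W" "card (set xs) = k"
      by (auto simp: indep_lists_def distinct_card)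
    then have "vec.span (set xs) \<in> grassmannian W k"
      using vec.span_minimal[OF _ W] by (auto simp: grassmannian_def vec.dim_eq_card_independent)
    moreover have "xs \<in> indep_lists (vec.span (set xs)) k"
      using xs vec.span_superset[of "set xs"] by (auto simp: indep_lists_def)
    ultimately show "xs \<in> (\<Union>U\<in>grassmannian W k. indep_lists U k)" by blast
  qed (auto simp: indep_lists_def grassmannian_def)
  have "card (indep_lists W k) = (\<Sum>U\<in>grassmannian W k. card (indep_lists U k))"
    unfolding lists_by_span
  proof (rule card_UN_disjoint)
    show "\<forall>U\<in>grassmannian W k. \<forall>U'\<in>grassmannian W k. U \<noteq> U' \<longrightarrow>
        indep_lists U k \<inter> indep_lists U' k = {}"
      using span_indep_list_eq unfolding grassmannian_def by blast
  qed auto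
  also have "\<dots> = (\<Sum>U\<in>grassmannian W k. \<Prod>l<k. CARD('a) ^ k - CARD('a) ^ l)"
    by (rule sum.cong) (auto simp: grassmannian_def card_indep_lists)
  finally show ?thesis by simp
qed

lemma qbinom_eq_ratio:
  assumes q: "2 \<le> q" and "k \<le> n"
  shows "qbinom q n k = real (\<Prod>l<k. q ^ n - q ^ l) / real (\<Prod>l<k. q ^ k - q ^ l)"
proof -
  have factor: "real (q ^ a - q ^ l) = real q ^ l * (real q ^ (a - l) - 1)" if "l < a" for a l
  proof -
    have "q ^ l \<le> q ^ a" using q that by (intro power_increasing) auto
    then have "real (q ^ a - q ^ l) = real q ^ a - real q ^ l" by (simp add: of_nat_diff)
    also have "real q ^ a = real q ^ l * real q ^ (a - l)"
      using that by (simp add: power_add[symmetric])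
    finally show ?thesis by (simp add: algebra_simps)
  qed
  have num: "real (\<Prod>l<k. q ^ n - q ^ l) = (\<Prod>l<k. real q ^ l) * (\<Prod>l<k. real q ^ (n - l) - 1)"
    using \<open>k \<le> n\<close> by (simp add: factor prod.distrib[symmetric])
  have den: "real (\<Prod>l<k. q ^ k - q ^ l) = (\<Prod>l<k. real q ^ l) * (\<Prod>l<k. real q ^ (k - l) - 1)"
    by (simp add: factor prod.distrib[symmetric])
  have "(\<Prod>j<k. real q ^ (j + 1) - 1) = (\<Prod>j<k. real q ^ ((k - Suc j) + 1) - 1)"
    by (rule prod.nat_diff_reindex[symmetric])
  also have "\<dots> = (\<Prod>l<k. real q ^ (k - l) - 1)"
    by (rule prod.cong) (auto simp: Suc_diff_Suc)
  finally have "(\<Prod>l<k. real q ^ (k - l) - 1) = (\<Prod>j<k. real q ^ (j + 1) - 1)" ..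
  moreover have "(\<Prod>l<k. real q ^ l) \<noteq> 0" using q by simp
  ultimately show ?thesis unfolding num den qbinom_def using q by simp
qed

lemma qbinom_pos:
  assumes "2 \<le> q" "k \<le> n"
  shows "0 < qbinom q n k"
proof -
  have pos: "0 < real q ^ m - 1" if "0 < m" for m
    using assms(1) that by (simp add: one_less_power)
  have "0 < (\<Prod>j<k. real q ^ (n - j) - 1)" using assms(2) by (intro prod_pos pos) auto
  moreover have "0 < (\<Prod>j<k. real q ^ (j + 1) - 1)" by (intro prod_pos pos) auto
  ultimately show ?thesis unfolding qbinom_def by (rule divide_pos_pos)
qed

lemma card_grassmannian:
  fixes W :: "('a::{finite,field} ^ 'n) set"
  assumes W: "vec.subspace W" and "k \<le> vec.dim W"
  shows "real (card (grassmannian W k)) = qbinom CARD('a) (vec.dim W) k"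
proof -
  have "CARD('a) ^ l < CARD('a) ^ k" if "l < k" for l
    using two_le_card_field[where 'a='a] that by (intro power_strict_increasing) auto
  then have "0 < (\<Prod>l<k. CARD('a) ^ k - CARD('a) ^ l)"
    by (intro prod_pos) simp
  moreover have "real (\<Prod>l<k. CARD('a) ^ vec.dim W - CARD('a) ^ l)
      = real (card (grassmannian W k)) * real (\<Prod>l<k. CARD('a) ^ k - CARD('a) ^ l)"
    using card_indep_lists_eq_grassmannian[OF W, of k] card_indep_lists[OF W, of k]
    by (metis of_nat_mult)
  ultimately show ?thesis
    unfolding qbinom_eq_ratio[OF two_le_card_field[where 'a='a] assms(2)] by (auto dest: leD)
qed

lemma mem_translate_iff: "x \<in> (+) a ` U \<longleftrightarrow> x - a \<in> (U::'a::ab_group_add set)"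
  by force

lemma mem_translate_self: "vec.subspace U \<Longrightarrow> u \<in> (+) u ` U"
  by (simp add: mem_translate_iff vec.subspace_0)

lemma translate_add_mem_iff:
  assumes W: "vec.subspace W" and w: "w \<in> W"
  shows "t + w \<in> (+) v ` W \<longleftrightarrow> t \<in> (+) v ` W"
  unfolding mem_translate_iff
proof
  assume "t + w - v \<in> W"
  from vec.subspace_diff[OF W this w] show "t - v \<in> W" by (simp add: algebra_simps)
next
  assume "t - v \<in> W"
  from vec.subspace_add[OF W this w] show "t + w - v \<in> W" by (simp add: algebra_simps)
qed

lemma translate_subset_imp_subset:
  assumes U: "vec.subspace U" and U': "vec.subspace U'" and sub: "(+) b ` U' \<subseteq> (+) a ` U"
  shows "U' \<subseteq> U"
proof
  fix x assume "x \<in> U'"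
  then have "b - a \<in> U" "b + x - a \<in> U"
    using sub mem_translate_self[OF U'] by (auto simp: mem_translate_iff)
  from vec.subspace_diff[OF U this(2) this(1)] show "x \<in> U" by simp
qed

lemma translates_eq_if_not_disjoint:
  assumes U: "vec.subspace U" and "(+) a ` U \<inter> (+) b ` U \<noteq> {}"
  shows "(+) a ` U = (+) b ` U"
proof -
  obtain t where "t \<in> (+) a ` U" "t \<in> (+) b ` U" using assms(2) by blast
  then have "t - a \<in> U" "t - b \<in> U" by (simp_all only: mem_translate_iff)
  from vec.subspace_diff[OF U this(2) this(1)] have ab: "a - b \<in> U" by simp
  have "x - a \<in> U \<longleftrightarrow> x - b \<in> U" for x
  proof
    assume "x - a \<in> U"
    from vec.subspace_add[OF U this ab] show "x - b \<in> U" by simp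
  next
    assume "x - b \<in> U"
    from vec.subspace_diff[OF U this ab] show "x - a \<in> U" by simp
  qed
  then show ?thesis unfolding set_eq_iff mem_translate_iff by blast
qed

lemma aff_space_translate: "vec.subspace U \<Longrightarrow> vec.dim U = k \<Longrightarrow> aff_space k ((+) u ` U)"
  unfolding aff_space_def by blast

lemma aff_space_nonempty: "aff_space k A \<Longrightarrow> A \<noteq> {}"
  unfolding aff_space_def using vec.subspace_0 by blast

definition parallel_class :: "('a::field ^ 'n) set \<Rightarrow> ('a ^ 'n) set \<Rightarrow> ('a ^ 'n) set set" where
  "parallel_class U X = (\<lambda>u. (+) u ` U) ` X"

lemma is_spread_parallel_class:
  assumes U: "vec.subspace U" "vec.dim U = k"
    and closed: "\<And>x u. x \<in> X \<Longrightarrow> u \<in> U \<Longrightarrow> x + u \<in> X"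
  shows "is_spread k X (parallel_class U X)"
  unfolding is_spread_def
proof (intro conjI)
  show "parallel_class U X \<subseteq> kspaces_in k X"
    using aff_space_translate[OF U] closed by (auto simp: parallel_class_def kspaces_in_def)
  show "\<forall>A\<in>parallel_class U X. \<forall>B\<in>parallel_class U X. A \<noteq> B \<longrightarrow> A \<inter> B = {}"
    using translates_eq_if_not_disjoint[OF U(1)] by (auto simp: parallel_class_def)
  show "\<Union> (parallel_class U X) = X"
    using closed mem_translate_self[OF U(1)] by (auto simp: parallel_class_def)
qed

lemma spread_member_subset: "is_spread k A S \<Longrightarrow> C \<in> S \<Longrightarrow> C \<subseteq> A"
  unfolding is_spread_def by blast

lemma spreads_disjoint:
  assumes "is_spread k A S" "is_spread k B R" "A \<inter> B = {}"
  shows "S \<inter> R = {}"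
proof (rule ccontr)
  assume "S \<inter> R \<noteq> {}"
  then obtain C where C: "C \<in> S" "C \<in> R" by blast
  then have "aff_space k C" using assms(1) by (auto simp: is_spread_def kspaces_in_def)
  moreover have "C \<subseteq> A \<inter> B"
    using spread_member_subset[OF assms(1) C(1)] spread_member_subset[OF assms(2) C(2)] by blast
  ultimately show False using assms(3) aff_space_nonempty by blast
qed

lemma is_spread_Un:
  assumes S: "is_spread k A S" and R: "is_spread k B R" and "A \<inter> B = {}"
  shows "is_spread k (A \<union> B) (S \<union> R)"
  unfolding is_spread_def
proof (intro conjI ballI impI)
  fix C D assume "C \<in> S \<union> R" "D \<in> S \<union> R" "C \<noteq> D"
  have cross: "C' \<inter> D' = {}" if "C' \<in> S" "D' \<in> R" for C' D'
    using spread_member_subset[OF S that(1)] spread_member_subset[OF R that(2)] \<open>A \<inter> B = {}\<close>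
    by blast
  from \<open>C \<in> S \<union> R\<close> \<open>D \<in> S \<union> R\<close> show "C \<inter> D = {}"
    by (elim UnE) (use S R \<open>C \<noteq> D\<close> cross in \<open>auto simp: is_spread_def\<close>)
next
  have "S \<subseteq> kspaces_in k A" "R \<subseteq> kspaces_in k B" using S R by (simp_all add: is_spread_def)
  then show "S \<union> R \<subseteq> kspaces_in k (A \<union> B)" by (auto simp: kspaces_in_def)
  show "\<Union> (S \<union> R) = A \<union> B" using S R by (simp add: is_spread_def)
qed

lemma card_Int_spread_add_complement:
  fixes L :: "('a::{finite,field} ^ 'n) set set"
  assumes all_spreads: "\<And>S. is_spread k UNIV S \<Longrightarrow> card (L \<inter> S) = x"
    and S: "is_spread k T S" and R: "is_spread k (- T) R"
  shows "card (L \<inter> S) + card (L \<inter> R) = x"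
proof -
  have "is_spread k UNIV (S \<union> R)" using is_spread_Un[OF S R] by simp
  then have "card (L \<inter> (S \<union> R)) = x" by (rule all_spreads)
  moreover have "L \<inter> (S \<union> R) = (L \<inter> S) \<union> (L \<inter> R)" by blast
  moreover have "(L \<inter> S) \<inter> (L \<inter> R) = {}" using spreads_disjoint[OF S R] by blast
  ultimately show ?thesis by (simp add: card_Un_disjoint)
qed

lemma is_spread_parallel_class_translate:
  assumes W: "vec.subspace W" and U: "U \<in> grassmannian W k"
  shows "is_spread k ((+) v ` W) (parallel_class U ((+) v ` W))"
    and "is_spread k (- ((+) v ` W)) (parallel_class U (- ((+) v ` W)))"
  using U translate_add_mem_iff[OF W]
  by (auto simp: grassmannian_def intro!: is_spread_parallel_class)

lemma kspaces_in_translate_eq: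
  assumes W: "vec.subspace W"
  shows "kspaces_in k ((+) v ` W) = (\<Union>U\<in>grassmannian W k. parallel_class U ((+) v ` W))"
proof safe
  fix A assume "A \<in> kspaces_in k ((+) v ` W)"
  then obtain a U where U: "vec.subspace U" "vec.dim U = k"
    and A: "A = (+) a ` U" "A \<subseteq> (+) v ` W"
    by (auto simp: kspaces_in_def aff_space_def)
  then have "U \<in> grassmannian W k"
    using translate_subset_imp_subset[OF W U(1)] by (simp add: grassmannian_def)
  moreover have "a \<in> (+) v ` W" using A mem_translate_self[OF U(1)] by blast
  then have "A \<in> parallel_class U ((+) v ` W)"
    unfolding parallel_class_def A(1) by (rule image_eqI[OF refl])
  ultimately show "A \<in> (\<Union>U\<in>grassmannian W k. parallel_class U ((+) v ` W))" by blast
next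
  fix U A assume U: "U \<in> grassmannian W k" and A: "A \<in> parallel_class U ((+) v ` W)"
  show "A \<in> kspaces_in k ((+) v ` W)"
    using A is_spread_parallel_class_translate(1)[OF W U] unfolding is_spread_def by blast
qed

lemma parallel_classes_disjoint:
  assumes "vec.subspace U" "vec.subspace U'" "U \<noteq> U'"
  shows "parallel_class U X \<inter> parallel_class U' Y = {}"
proof -
  have "(+) a ` U \<noteq> (+) b ` U'" for a b
  proof
    assume eq: "(+) a ` U = (+) b ` U'"
    then have "U' \<subseteq> U" "U \<subseteq> U'"
      using translate_subset_imp_subset[OF assms(1,2), of b a]
        translate_subset_imp_subset[OF assms(2,1), of a b] by simp_all
    with \<open>U \<noteq> U'\<close> show False by blast
  qed
  then show ?thesis by (auto simp: parallel_class_def)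
qed

lemma card_Int_kspaces_in_translate:
  fixes L :: "('a::{finite,field} ^ 'n) set set"
  assumes W: "vec.subspace W"
    and const: "\<And>S. is_spread k ((+) v ` W) S \<Longrightarrow> card (L \<inter> S) = c"
  shows "card (L \<inter> kspaces_in k ((+) v ` W)) = card (grassmannian W k) * c"
proof -
  let ?P = "\<lambda>U. L \<inter> parallel_class U ((+) v ` W)"
  have "card (L \<inter> kspaces_in k ((+) v ` W)) = card (\<Union>U\<in>grassmannian W k. ?P U)"
    by (simp add: kspaces_in_translate_eq[OF W])
  also have "\<dots> = (\<Sum>U\<in>grassmannian W k. card (?P U))"
  proof (rule card_UN_disjoint)
    show "\<forall>U\<in>grassmannian W k. \<forall>U'\<in>grassmannian W k. U \<noteq> U' \<longrightarrow> ?P U \<inter> ?P U' = {}"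
      using parallel_classes_disjoint unfolding grassmannian_def by blast
  qed auto
  also have "\<dots> = (\<Sum>U\<in>grassmannian W k. c)"
    using const is_spread_parallel_class_translate(1)[OF W] by (intro sum.cong) auto
  also have "\<dots> = card (grassmannian W k) * c" by simp
  finally show ?thesis .
qed

theorem theorem3p8:
  fixes L :: "('a::{finite,field} ^ 'n) set set"
    and T :: "('a ^ 'n) set"
    and k i x :: nat
  assumes "1 \<le> k" and "k \<le> CARD('n) - 1"
    and "L \<subseteq> kspaces_in k (UNIV :: ('a ^ 'n) set)"
    and "real (card L) = real x * qbinom CARD('a) CARD('n) k"
    and all_spreads: "\<And>S. is_spread k (UNIV :: ('a ^ 'n) set) S \<Longrightarrow> card (L \<inter> S) = x"
    and "aff_space i T"
    and "i \<ge> max (k + 1) 3"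
    and S: "is_spread k T S"
  shows "real (card ((L \<inter> kspaces_in k T) \<inter> S))
           = real (card (L \<inter> kspaces_in k T)) / qbinom CARD('a) i k"
proof -
  obtain v W where W: "vec.subspace W" "vec.dim W = i" and T: "T = (+) v ` W"
    using \<open>aff_space i T\<close> unfolding aff_space_def by blast
  have "k \<le> i" using \<open>i \<ge> max (k + 1) 3\<close> by simp
  then have count: "real (card (grassmannian W k)) = qbinom CARD('a) i k"
    and pos: "0 < qbinom CARD('a) i k"
    using card_grassmannian[OF W(1)] qbinom_pos[OF two_le_card_field] W(2) by auto
  then obtain U0 where "U0 \<in> grassmannian W k" by fastforce
  then have R: "is_spread k (- T) (parallel_class U0 (- T))"
    using is_spread_parallel_class_translate(2)[OF W(1)] T by blast
  have "card (L \<inter> S') = card (L \<inter> S)" if "is_spread k T S'" for S'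
    using card_Int_spread_add_complement[OF all_spreads _ R] that S by (metis add_right_cancel)
  then have "card (L \<inter> kspaces_in k T) = card (grassmannian W k) * card (L \<inter> S)"
    using card_Int_kspaces_in_translate[OF W(1)] T by blast
  moreover have "L \<inter> kspaces_in k T \<inter> S = L \<inter> S" using S by (auto simp: is_spread_def)
  ultimately show ?thesis using count pos by simp
qed

end
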